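(* The mechanism given by Algorithm 3 (defined in the context) is risk-averse truthful when all agents are hungry, i.e. when the domain of true densities, reports, and other agents' reports is the set of strictly positive piecewise-constant functions on $[0,1]$.
   Context: Algorithm 3 (for $n$ agents with strictly positive piecewise-constant densities $f_i:[0,1]\to\mathbb{R}_{>0}$, $v_i(X)=\int_X f_i$): for each agent $i$, let $0=x_0^{(i)}<x_1^{(i)}<\dots<x_{n-1}^{(i)}<x_n^{(i)}=1$ be the points with $v_i([x_j^{(i)},x_{j+1}^{(i)}))=\frac1n v_i([0,1])$ for all $j$. Set $c_0=0$ and $U=\{1,\dots,n\}$. For $j=1,\dots,n-1$: let $i_j\in U$ minimize $x_j^{(i)}$ over $i\in U$ (ties broken by smallest index), set $c_j=x_j^{(i_j)}$, give $[c_{j-1},c_j)$ to $i_j$, and remove $i_j$ from $U$. The remaining agent receives $[c_{n-1},1]$. A mechanism $\mathcal{M}$ is risk-averse truthful if for each agent $i$, each true density $f_i$ and each report $f_i'$ (in the domain), at least one holds: (1) for all reports $f_{-i}=(f_j)_{j\ne i}$ of the others, $v_i(\mathcal{M}_i(f_i,f_{-i}))\ge v_i(\mathcal{M}_i(f_i',f_{-i}))$; (2) there exist $f_{-i}$ with $v_i(\mathcal{M}_i(f_i',f_{-i}))<\frac1n v_i([0,1])$ (utilities w.r.t. the true $f_i$). *)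

theory Defs
  imports "HOL-Analysis.Analysis"
begin

text \<open>Densities are functions real => real; only their values on [0,1] matter.\<close>

definition piecewise_constant :: "(real \<Rightarrow> real) \<Rightarrow> bool" where
  "piecewise_constant f \<longleftrightarrow>
     (\<exists>P. finite P \<and> {0, 1} \<subseteq> P \<and> P \<subseteq> {0..1} \<and>
        (\<forall>a\<in>P. \<forall>b\<in>P. a < b \<and> {a<..<b} \<inter> P = {} \<longrightarrow>
           (\<exists>c. \<forall>x\<in>{a<..<b}. f x = c)))"

definition hungry :: "(real \<Rightarrow> real) \<Rightarrow> bool" where
  "hungry f \<longleftrightarrow> piecewise_constant f \<and> (\<forall>x\<in>{0..1}. f x > 0)"

definition val :: "(real \<Rightarrow> real) \<Rightarrow> real set \<Rightarrow> real" where
  "val f X = integral X f"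

text \<open>The points 0 = x_0 < x_1 < ... < x_n = 1 with v([x_j, x_{j+1})) = v([0,1])/n
  (extended by 1 beyond index n, to make the description unique).\<close>

definition cuts :: "(real \<Rightarrow> real) \<Rightarrow> nat \<Rightarrow> nat \<Rightarrow> real" where
  "cuts f n = (THE x. x 0 = 0 \<and> x n = 1 \<and> (\<forall>j<n. x j < x (Suc j)) \<and>
      (\<forall>j<n. val f {x j..<x (Suc j)} = val f {0..1} / real n) \<and>
      (\<forall>j>n. x j = 1))"

text \<open>Algorithm 3, agents indexed 0,...,n-1 (tie-breaking by smallest index).
  State after step j: (remaining agents U, last cut c_j, pieces assigned so far).\<close>

fun alg3_state :: "nat \<Rightarrow> (nat \<Rightarrow> real \<Rightarrow> real) \<Rightarrow> nat \<Rightarrow> nat set \<times> real \<times> (nat \<Rightarrow> real set)" where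
  "alg3_state n F 0 = ({..<n}, 0, (\<lambda>_. {}))"
| "alg3_state n F (Suc j) =
     (case alg3_state n F j of (U, c, A) \<Rightarrow>
        (let x = (\<lambda>i. cuts (F i) n (Suc j));
             i' = (LEAST i. i \<in> U \<and> (\<forall>k\<in>U. x i \<le> x k));
             c' = x i'
         in (U - {i'}, c', A(i' := {c..<c'}))))"

definition alg3 :: "nat \<Rightarrow> (nat \<Rightarrow> real \<Rightarrow> real) \<Rightarrow> nat \<Rightarrow> real set" where
  "alg3 n F i = (case alg3_state n F (n - 1) of (U, c, A) \<Rightarrow>
      if i \<in> U then {c..1} else A i)"

definition risk_averse_truthful ::
  "((real \<Rightarrow> real) \<Rightarrow> bool) \<Rightarrow> nat \<Rightarrow> ((nat \<Rightarrow> real \<Rightarrow> real) \<Rightarrow> nat \<Rightarrow> real set) \<Rightarrow> bool" where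
  "risk_averse_truthful D n M \<longleftrightarrow>
     (\<forall>i<n. \<forall>f f'. D f \<longrightarrow> D f' \<longrightarrow>
        (\<forall>F. (\<forall>j<n. j \<noteq> i \<longrightarrow> D (F j)) \<longrightarrow>
             val f (M (F(i := f)) i) \<ge> val f (M (F(i := f')) i))
      \<or> (\<exists>F. (\<forall>j<n. j \<noteq> i \<longrightarrow> D (F j)) \<and>
             val f (M (F(i := f')) i) < val f {0..1} / real n))"

end

theory Submission
  imports Defs
begin

text \<open>Let \<open>y\<close> be the cut points of the report \<open>f'\<close>. If every piece \<open>[y k, y (k+1))\<close>
  is worth at least \<open>1/n\<close> of the whole under the true density \<open>f\<close>, then all of them are
  worth exactly \<open>1/n\<close>, so \<open>y\<close> are also the cut points of \<open>f\<close>; since Algorithm 3 only sees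
  cut points, lying changes nothing. Otherwise some piece \<open>[y m, y (m+1))\<close> is worth less than
  \<open>1/n\<close>, and by continuity so is \<open>[a, y (m+1))\<close> for some \<open>a\<close> slightly below \<open>y m\<close>.
  Let all other agents report one step density whose cut points lie just below \<open>y 1, ..., y m\<close>,
  equal \<open>a\<close> at index \<open>m\<close>, and lie just above \<open>y (m+1)\<close>: they win the first \<open>m\<close> rounds,
  and then the liar wins and receives \<open>[a, y (m+1))\<close>, less than a proportional share.\<close>

lemma strict_chain_less:
  fixes x :: "nat \<Rightarrow> 'a::order"
  assumes "\<forall>j<n. x j < x (Suc j)" "k < l" "l \<le> n"
  shows "x k < x l"
  by (rule lift_Suc_mono_less_ivl[of "{..<n}"]) (use assms in auto)

lemma strict_chain_le:
  fixes x :: "nat \<Rightarrow> 'a::order"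
  assumes "\<forall>j<n. x j < x (Suc j)" "k \<le> l" "l \<le> n"
  shows "x k \<le> x l"
  using strict_chain_less[OF assms(1), of k l] assms(2,3) by (cases "k = l") auto

lemma exists_bracketing_index:
  fixes z :: "nat \<Rightarrow> 'a::linorder"
  assumes "0 < n" "z 0 \<le> t" "t \<le> z n"
  shows "\<exists>k<n. z k \<le> t \<and> t \<le> z (Suc k)"
  using assms
proof (induction n)
  case 0
  then show ?case by simp
next
  case (Suc n)
  show ?case
  proof (cases "0 < n \<and> t \<le> z n")
    case True
    then show ?thesis using Suc.IH Suc.prems less_SucI by blast
  next
    case False
    then show ?thesis using Suc.prems by (intro exI[of _ n]) auto
  qed
qed

section \<open>Piecewise-constant densities\<close>

lemma enclosing_gap:
  fixes P :: "real set"
  assumes "finite P" "{0, 1} \<subseteq> P" "0 \<le> u" "u \<le> v" "v \<le> 1" "{u<..<v} \<inter> P = {}"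
  obtains a b where "a \<in> P" "b \<in> P" "a \<le> u" "v \<le> b" "{a<..<b} \<inter> P = {}"
proof -
  define a where "a = Max {p\<in>P. p \<le> u}"
  define b where "b = Min {p\<in>P. v \<le> p}"
  have below: "finite {p\<in>P. p \<le> u}" "{p\<in>P. p \<le> u} \<noteq> {}"
    and above: "finite {p\<in>P. v \<le> p}" "{p\<in>P. v \<le> p} \<noteq> {}"
    using assms by auto
  have "a \<in> P" "a \<le> u" using Max_in[OF below] unfolding a_def by auto
  moreover have "b \<in> P" "v \<le> b" using Min_in[OF above] unfolding b_def by auto
  moreover have "{a<..<b} \<inter> P = {}"
  proof (rule ccontr)
    assume "{a<..<b} \<inter> P \<noteq> {}"
    then obtain p where p: "p \<in> P" "a < p" "p < b" by auto
    have "\<not> p \<le> u" using p below unfolding a_def by (metis (mono_tags) Max_ge mem_Collect_eq not_le)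
    moreover have "\<not> v \<le> p" using p above unfolding b_def by (metis (mono_tags) Min_le mem_Collect_eq not_le)
    ultimately have "p \<in> {u<..<v}" using p by simp
    with p(1) assms(6) show False by blast
  qed
  ultimately show ?thesis using that by blast
qed

lemma integrable_on_if_constant_inside:
  fixes h :: "real \<Rightarrow> real"
  assumes "\<forall>t\<in>{u<..<v}. h t = c"
  shows "h integrable_on {u..v}"
  by (rule integrable_spike_finite[where S="{u,v}" and f="\<lambda>_. c"]) (use assms in auto)

lemma piecewise_constant_integrable_on_gap:
  fixes h :: "real \<Rightarrow> real"
  assumes P: "finite P" "{0, 1} \<subseteq> P"
    and const: "\<forall>a\<in>P. \<forall>b\<in>P. a < b \<and> {a<..<b} \<inter> P = {} \<longrightarrow> (\<exists>c. \<forall>x\<in>{a<..<b}. h x = c)"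
    and uv: "0 \<le> u" "u < v" "v \<le> 1" "{u<..<v} \<inter> P = {}"
  shows "h integrable_on {u..v}"
proof -
  obtain a b where "a \<in> P" "b \<in> P" "a \<le> u" "v \<le> b" "{a<..<b} \<inter> P = {}"
    by (rule enclosing_gap[OF P uv(1) less_imp_le[OF uv(2)] uv(3,4)])
  with const uv obtain c where "\<forall>x\<in>{a<..<b}. h x = c" by (meson le_less_trans less_le_trans)
  then show ?thesis
    using \<open>a \<le> u\<close> \<open>v \<le> b\<close> by (intro integrable_on_if_constant_inside[of u v h c]) auto
qed

lemma piecewise_constant_integrable:
  assumes "piecewise_constant h"
  shows "h integrable_on {0..1}"
proof -
  obtain P where P: "finite P" "{0, 1} \<subseteq> P"
    and const: "\<forall>a\<in>P. \<forall>b\<in>P. a < b \<and> {a<..<b} \<inter> P = {} \<longrightarrow> (\<exists>c. \<forall>x\<in>{a<..<b}. h x = c)"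
    using assms unfolding piecewise_constant_def by blast
  note gap_integrable = piecewise_constant_integrable_on_gap[OF P const]
  have "h integrable_on cbox 0 1"
  proof (rule integrable_on_little_subintervals, intro ballI)
    fix x :: real assume "x \<in> cbox 0 1"
    obtain d where d: "d > 0" "\<forall>p\<in>P. p \<noteq> x \<longrightarrow> d \<le> dist x p"
      using finite_set_avoid[OF P(1)] by blast
    show "\<exists>d>0. \<forall>u v. x \<in> cbox u v \<and> cbox u v \<subseteq> ball x d \<and> cbox u v \<subseteq> cbox 0 1
            \<longrightarrow> h integrable_on cbox u v"
    proof (intro exI[of _ d] conjI allI impI)
      fix u v :: real
      assume uv: "x \<in> cbox u v \<and> cbox u v \<subseteq> ball x d \<and> cbox u v \<subseteq> cbox 0 1"
      then have ux: "u \<le> x" "x \<le> v" "0 \<le> u" "v \<le> 1" by auto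
      have "t \<notin> P" if "u \<le> t" "t \<le> v" "t \<noteq> x" for t
        using uv d(2) that by (force simp: subset_iff)
      then have "{u<..<x} \<inter> P = {}" "{x<..<v} \<inter> P = {}" using ux by fastforce+
      moreover have "h integrable_on {a..a}" for a using integrable_on_refl[of h a] by simp
      ultimately have "h integrable_on {u..x}" "h integrable_on {x..v}"
        using gap_integrable[of u x] gap_integrable[of x v] ux
        by (cases "u = x", auto, cases "x = v", auto)
      then show "h integrable_on cbox u v"
        using Henstock_Kurzweil_Integration.integrable_combine[OF ux(1,2)] by simp
    qed (use d in auto)
  qed
  then show ?thesis by simp
qed

lemma piecewise_constant_finite_range:
  assumes "piecewise_constant h"
  shows "finite (h ` {0..1})"
proof -
  obtain P where P: "finite P" "{0, 1} \<subseteq> P"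
    and const: "\<forall>a\<in>P. \<forall>b\<in>P. a < b \<and> {a<..<b} \<inter> P = {} \<longrightarrow> (\<exists>c. \<forall>x\<in>{a<..<b}. h x = c)"
    using assms unfolding piecewise_constant_def by blast
  define M where "M = (\<lambda>(a, b). (a + b) / 2) ` (P \<times> P)"
  have "h ` {0..1} \<subseteq> h ` (P \<union> M)"
  proof (intro subsetI, elim imageE)
    fix y x assume y: "y = h x" and x: "x \<in> {0..1}"
    show "y \<in> h ` (P \<union> M)"
    proof (cases "x \<in> P")
      case False
      obtain a b where ab: "a \<in> P" "b \<in> P" "a \<le> x" "x \<le> b" "{a<..<b} \<inter> P = {}"
        using enclosing_gap[OF P, of x x] x by auto
      then have "a < x" "x < b" using False by (auto simp: le_less)
      then obtain c where "\<forall>t\<in>{a<..<b}. h t = c" using const ab by force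
      then have "h x = h ((a + b) / 2)" using \<open>a < x\<close> \<open>x < b\<close> by simp
      moreover have "(a + b) / 2 \<in> M" unfolding M_def using ab by force
      ultimately show ?thesis using y by blast
    qed (use y in blast)
  qed
  moreover have "finite (P \<union> M)" using P(1) unfolding M_def by simp
  ultimately show ?thesis by (rule finite_subset[OF _ finite_imageI])
qed

lemma hungry_bounded_below:
  assumes "hungry h"
  obtains \<mu> where "\<mu> > 0" "\<forall>x\<in>{0..1}. \<mu> \<le> h x"
proof
  have fin: "finite (h ` {0..1})" and pos: "\<forall>x\<in>{0..1}. h x > 0"
    using assms piecewise_constant_finite_range unfolding hungry_def by auto
  show "Min (h ` {0..1}) > 0" using fin pos by (subst Min_gr_iff) auto
  show "\<forall>x\<in>{0..1}. Min (h ` {0..1}) \<le> h x" using fin by simp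
qed

section \<open>Cumulative value of a hungry density\<close>

definition cumulative :: "(real \<Rightarrow> real) \<Rightarrow> real \<Rightarrow> real" where
  "cumulative h t = integral {0..t} h"

lemma hungry_integrable_on:
  assumes "hungry h" "0 \<le> a" "b \<le> 1"
  shows "h integrable_on {a..b}"
proof (cases "a \<le> b")
  case True
  then show ?thesis
    using integrable_subinterval_real[OF piecewise_constant_integrable] assms
    unfolding hungry_def by auto
qed (simp add: integrable_on_empty)

lemma integral_atLeastLessThan_real:
  fixes h :: "real \<Rightarrow> real"
  shows "integral {a..<b} h = integral {a..b} h"
proof (rule integral_spike_set)
  show "negligible {x \<in> {a..<b} - {a..b}. h x \<noteq> 0}" by (rule negligible_subset[of "{}"]) auto
  show "negligible {x \<in> {a..b} - {a..<b}. h x \<noteq> 0}" by (rule negligible_subset[of "{b}"]) auto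
qed

lemma val_atLeastAtMost:
  assumes "hungry h" "0 \<le> a" "a \<le> b" "b \<le> 1"
  shows "val h {a..b} = cumulative h b - cumulative h a"
  using Henstock_Kurzweil_Integration.integral_combine[of 0 a b h] hungry_integrable_on[of h 0 b] assms
  unfolding val_def cumulative_def by auto

lemma val_atLeastLessThan:
  assumes "hungry h" "0 \<le> a" "a \<le> b" "b \<le> 1"
  shows "val h {a..<b} = cumulative h b - cumulative h a"
  using val_atLeastAtMost[OF assms] integral_atLeastLessThan_real unfolding val_def by metis

lemma cumulative_0 [simp]: "cumulative h 0 = 0"
  unfolding cumulative_def by simp

lemma val_unit_interval: "val h {0..1} = cumulative h 1"
  unfolding val_def cumulative_def ..

lemma cumulative_strict_mono:
  assumes "hungry h" "0 \<le> a" "a < b" "b \<le> 1"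
  shows "cumulative h a < cumulative h b"
proof -
  obtain \<mu> where \<mu>: "\<mu> > 0" "\<forall>x\<in>{0..1}. \<mu> \<le> h x"
    using hungry_bounded_below[OF assms(1)] by blast
  have "0 < (b - a) * \<mu>" using \<mu> assms by simp
  also have "\<dots> = integral {a..b} (\<lambda>_. \<mu>)" using assms by simp
  also have "\<dots> \<le> integral {a..b} h"
    by (rule integral_le) (use hungry_integrable_on[of h a b] assms \<mu> in auto)
  also have "\<dots> = cumulative h b - cumulative h a"
    using val_atLeastAtMost[of h a b] assms unfolding val_def by simp
  finally show ?thesis by simp
qed

lemma cumulative_less_iff:
  assumes "hungry h" "a \<in> {0..1}" "b \<in> {0..1}"
  shows "cumulative h a < cumulative h b \<longleftrightarrow> a < b"
  using cumulative_strict_mono[OF assms(1), of a b] cumulative_strict_mono[OF assms(1), of b a] assms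
  by (cases a b rule: linorder_cases) auto

lemma cumulative_eq_iff:
  assumes "hungry h" "a \<in> {0..1}" "b \<in> {0..1}"
  shows "cumulative h a = cumulative h b \<longleftrightarrow> a = b"
  using cumulative_less_iff[OF assms] cumulative_less_iff[OF assms(1,3,2)] by (metis not_less_iff_gr_or_eq)

lemma cumulative_continuous_on:
  assumes "hungry h"
  shows "continuous_on {0..1} (cumulative h)"
  unfolding cumulative_def[abs_def]
  using indefinite_integral_continuous_1 piecewise_constant_integrable assms
  unfolding hungry_def by blast

lemma cumulative_1_pos:
  assumes "hungry h"
  shows "cumulative h 1 > 0"
  using cumulative_strict_mono[OF assms, of 0 1] by simp

section \<open>Equipartitions and the cut points of Algorithm 3\<close>

definition equipartition :: "(real \<Rightarrow> real) \<Rightarrow> nat \<Rightarrow> (nat \<Rightarrow> real) \<Rightarrow> bool" where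
  "equipartition f n x \<longleftrightarrow> x 0 = 0 \<and> x n = 1 \<and> (\<forall>j<n. x j < x (Suc j)) \<and>
      (\<forall>j<n. val f {x j..<x (Suc j)} = val f {0..1} / real n) \<and> (\<forall>j>n. x j = 1)"

lemma cuts_eq_The_equipartition: "cuts f n = (THE x. equipartition f n x)"
  unfolding cuts_def equipartition_def ..

lemma equipartition_unit_interval:
  assumes "equipartition f n x" "k \<le> n"
  shows "x k \<in> {0..1}"
  using strict_chain_le[of n x 0 k] strict_chain_le[of n x k n] assms
  unfolding equipartition_def by auto

lemma equipartition_cumulative:
  assumes h: "hungry h" and x: "equipartition h n x"
  shows "k \<le> n \<Longrightarrow> cumulative h (x k) = real k * cumulative h 1 / real n"
proof (induction k)
  case 0
  then show ?case using x unfolding equipartition_def by simp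
next
  case (Suc k)
  have "cumulative h (x (Suc k)) - cumulative h (x k) = val h {x k..<x (Suc k)}"
    using val_atLeastAtMost equipartition_unit_interval[OF x] x Suc.prems
    by (subst val_atLeastLessThan[OF h]) (auto simp: equipartition_def less_imp_le)
  also have "\<dots> = cumulative h 1 / real n"
    using x Suc.prems unfolding equipartition_def val_unit_interval by simp
  finally show ?case using Suc by (simp add: field_simps)
qed

lemma equipartition_unique:
  assumes h: "hungry h" and "equipartition h n x" "equipartition h n y"
  shows "x = y"
proof
  fix k
  show "x k = y k"
  proof (cases "k \<le> n")
    case True
    then show ?thesis
      using equipartition_cumulative[OF h] equipartition_unit_interval cumulative_eq_iff[OF h] assms
      by metis
  next
    case False
    then show ?thesis using assms unfolding equipartition_def by auto
  qed
qed

lemma equipartition_exists: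
  assumes h: "hungry h" and n: "n \<ge> 1"
  shows "\<exists>x. equipartition h n x"
proof -
  define V where "V = cumulative h 1"
  have V: "V > 0" unfolding V_def by (rule cumulative_1_pos[OF h])
  have "\<exists>t\<in>{0..1}. cumulative h t = real k * V / real n" if "k \<le> n" for k
  proof -
    have "0 \<le> real k * V / real n" "real k * V / real n \<le> V"
      using that n V by (simp_all add: field_simps)
    then show ?thesis
      using IVT'[of "cumulative h" 0 _ 1] cumulative_continuous_on[OF h] unfolding V_def
      by (simp, metis atLeastAtMost_iff)
  qed
  then obtain t where t: "\<And>k. k \<le> n \<Longrightarrow> t k \<in> {0..1} \<and> cumulative h (t k) = real k * V / real n"
    by metis
  define x where "x k = (if k \<le> n then t k else 1)" for k
  have x: "x k \<in> {0..1}" "cumulative h (x k) = real k * V / real n" if "k \<le> n" for k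
    using t[OF that] that unfolding x_def by auto
  have "x 0 = 0" "x n = 1"
    using x[of 0] x[of n] n cumulative_eq_iff[OF h] unfolding V_def by fastforce+
  moreover have inc: "x j < x (Suc j)" if "j < n" for j
  proof -
    have "real j * V / real n < real (Suc j) * V / real n" using V n by (simp add: divide_strict_right_mono)
    then show ?thesis using x[of j] x[of "Suc j"] that cumulative_less_iff[OF h] by (metis Suc_leI less_imp_le)
  qed
  moreover have "val h {x j..<x (Suc j)} = val h {0..1} / real n" if "j < n" for j
    using x[of j] x[of "Suc j"] inc[OF that] that unfolding val_unit_interval V_def
    by (subst val_atLeastLessThan[OF h]) (auto simp: field_simps)
  moreover have "\<forall>j>n. x j = 1" unfolding x_def by simp
  ultimately show ?thesis unfolding equipartition_def by blast
qed

lemma cuts_eqI: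
  assumes "hungry h" "equipartition h n y"
  shows "cuts h n = y"
  unfolding cuts_eq_The_equipartition
  using equipartition_unique[OF assms(1)] assms(2) by blast

lemma equipartition_cuts:
  assumes "hungry h" "n \<ge> 1"
  shows "equipartition h n (cuts h n)"
  using equipartition_exists[OF assms] cuts_eqI[OF assms(1)] by blast

lemma equipartitionI_no_lighter_piece:
  assumes h: "hungry h"
    and y: "y 0 = 0" "y n = 1" "\<forall>j<n. y j < y (Suc j)" "\<forall>j>n. y j = 1"
    and no_lighter: "\<forall>k<n. val h {0..1} / real n \<le> val h {y k..<y (Suc k)}"
  shows "equipartition h n y"
proof -
  define V where "V = cumulative h 1"
  define d where "d k = val h {y k..<y (Suc k)}" for k
  have "y k \<in> {0..1}" if "k \<le> n" for k
    using strict_chain_le[OF y(3), of 0 k] strict_chain_le[OF y(3), of k n] y that by auto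
  then have d: "d k = cumulative h (y (Suc k)) - cumulative h (y k)" if "k < n" for k
    unfolding d_def using y(3) that by (intro val_atLeastLessThan[OF h]) (auto simp: less_imp_le)
  have "(\<Sum>k<n. d k) = V"
    using sum_lessThan_telescope[of "\<lambda>k. cumulative h (y k)" n] y unfolding V_def by (simp add: d)
  have "d k = V / real n" if k: "k < n" for k
  proof (rule ccontr)
    assume "d k \<noteq> V / real n"
    then have "V / real n < d k" using no_lighter k unfolding d_def V_def val_unit_interval by force
    then have "(\<Sum>k<n. V / real n) < (\<Sum>k<n. d k)"
      using no_lighter k unfolding d_def V_def val_unit_interval by (intro sum_strict_mono_ex1) auto
    then show False using \<open>(\<Sum>k<n. d k) = V\<close> k by simp
  qed
  then show ?thesis using y unfolding equipartition_def d_def V_def val_unit_interval by simp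
qed

section \<open>Densities with prescribed cut points\<close>

text \<open>On the \<open>k\<close>-th piece the density is \<open>1 / (z (k+1) - z k)\<close>, so every piece has value 1;
  the breakpoints, where two terms add up, form a null set.\<close>

definition step_density :: "nat \<Rightarrow> (nat \<Rightarrow> real) \<Rightarrow> real \<Rightarrow> real" where
  "step_density n z t = (\<Sum>k<n. indicator {z k..z (Suc k)} t / (z (Suc k) - z k))"

lemma step_density_eq_inside:
  assumes inc: "\<forall>j<n. z j < z (Suc j)" and k: "k < n" and t: "z k < t" "t < z (Suc k)"
  shows "step_density n z t = 1 / (z (Suc k) - z k)"
proof -
  have "t \<notin> {z j..z (Suc j)}" if "j < n" "j \<noteq> k" for j
  proof (cases "j < k")
    case True
    then show ?thesis using strict_chain_le[OF inc, of "Suc j" k] k t by auto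
  next
    case False
    then show ?thesis using strict_chain_le[OF inc, of "Suc k" j] that t by auto
  qed
  then have "step_density n z t = indicator {z k..z (Suc k)} t / (z (Suc k) - z k)"
    unfolding step_density_def using k by (subst sum.remove[of _ k]) (auto intro!: sum.neutral)
  then show ?thesis using t by simp
qed

lemma step_density_pos:
  assumes inc: "\<forall>j<n. z j < z (Suc j)" and n: "n \<ge> 1" and t: "z 0 \<le> t" "t \<le> z n"
  shows "step_density n z t > 0"
proof -
  obtain k where k: "k < n" "z k \<le> t" "t \<le> z (Suc k)"
    using exists_bracketing_index[of n z t] t n by auto
  have "0 < indicator {z k..z (Suc k)} t / (z (Suc k) - z k)"
    using k inc by simp
  also have "\<dots> \<le> step_density n z t"
    unfolding step_density_def
    by (rule member_le_sum) (use inc k in \<open>auto intro!: divide_nonneg_pos\<close>)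
  finally show ?thesis .
qed

lemma step_density_piecewise_constant:
  assumes inc: "\<forall>j<n. z j < z (Suc j)" and z: "z 0 = 0" "z n = 1"
  shows "piecewise_constant (step_density n z)"
  unfolding piecewise_constant_def
proof (intro exI[of _ "z ` {..n}"] conjI ballI impI)
  show "finite (z ` {..n})" by simp
  show "{0, 1} \<subseteq> z ` {..n}" using z by force
  show "z ` {..n} \<subseteq> {0..1}"
    using strict_chain_le[OF inc, of 0] strict_chain_le[OF inc, of _ n] z by auto
  fix a b assume ab: "a < b \<and> {a<..<b} \<inter> z ` {..n} = {}"
  show "\<exists>c. \<forall>x\<in>{a<..<b}. step_density n z x = c"
  proof (intro exI[of _ "step_density n z ((a + b) / 2)"] ballI)
    fix x assume x: "x \<in> {a<..<b}"
    have "indicator {z k..z (Suc k)} x = (indicator {z k..z (Suc k)} ((a + b) / 2) :: real)" if "k < n" for k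
    proof -
      have "z k \<notin> {a<..<b}" "z (Suc k) \<notin> {a<..<b}" using ab that by auto
      then have "x \<in> {z k..z (Suc k)} \<longleftrightarrow> (a + b) / 2 \<in> {z k..z (Suc k)}"
        using x ab by auto
      then show ?thesis by (simp add: indicator_def)
    qed
    then show "step_density n z x = step_density n z ((a + b) / 2)"
      unfolding step_density_def by (intro sum.cong) auto
  qed
qed

lemma step_density_hungry:
  assumes inc: "\<forall>j<n. z j < z (Suc j)" and n: "n \<ge> 1" and z: "z 0 = 0" "z n = 1"
  shows "hungry (step_density n z)"
  unfolding hungry_def
  using step_density_piecewise_constant[OF inc z] step_density_pos[OF inc n] z by auto

lemma integral_step_density_piece:
  assumes inc: "\<forall>j<n. z j < z (Suc j)" and k: "k < n"
  shows "integral {z k..z (Suc k)} (step_density n z) = 1"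
proof -
  have "integral {z k..z (Suc k)} (step_density n z)
      = integral {z k..z (Suc k)} (\<lambda>_. 1 / (z (Suc k) - z k))"
    by (rule integral_spike[of "{z k, z (Suc k)}"]) (auto simp: step_density_eq_inside[OF inc k])
  also have "\<dots> = 1" using inc[rule_format, OF k] by simp
  finally show ?thesis .
qed

lemma cuts_step_density:
  assumes inc: "\<forall>j<n. z j < z (Suc j)" and n: "n \<ge> 1"
    and z: "z 0 = 0" "z n = 1" "\<forall>j>n. z j = 1"
  shows "cuts (step_density n z) n = z"
proof (rule cuts_eqI)
  let ?g = "step_density n z"
  show h: "hungry ?g" by (rule step_density_hungry[OF inc n z(1,2)])
  have piece: "val ?g {z k..<z (Suc k)} = 1" if "k < n" for k
    using integral_step_density_piece[OF inc that] unfolding val_def integral_atLeastLessThan_real .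
  have "z k \<in> {0..1}" if "k \<le> n" for k
    using strict_chain_le[OF inc, of 0 k] strict_chain_le[OF inc, of k n] z that by auto
  then have "val ?g {z k..<z (Suc k)} = cumulative ?g (z (Suc k)) - cumulative ?g (z k)" if "k < n" for k
    using inc that by (intro val_atLeastLessThan[OF h]) (auto simp: less_imp_le)
  then have "val ?g {0..1} = real n"
    using sum_lessThan_telescope[of "\<lambda>k. cumulative ?g (z k)" n] piece z
    unfolding val_unit_interval by simp
  then show "equipartition ?g n z"
    unfolding equipartition_def using piece inc z n by simp
qed

section \<open>Runs of Algorithm 3\<close>

lemma alg3_state_SucE:
  assumes S: "alg3_state n F j = (U, c, A)" and U: "finite U" "U \<noteq> {}"
  obtains w where "w \<in> U" "\<forall>k\<in>U. cuts (F w) n (Suc j) \<le> cuts (F k) n (Suc j)"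
    "alg3_state n F (Suc j) = (U - {w}, cuts (F w) n (Suc j), A(w := {c..<cuts (F w) n (Suc j)}))"
proof -
  let ?x = "\<lambda>l. cuts (F l) n (Suc j)"
  define w where "w = (LEAST l. l \<in> U \<and> (\<forall>k\<in>U. ?x l \<le> ?x k))"
  have "Min (?x ` U) \<in> ?x ` U" using U by simp
  then obtain l where "l \<in> U" "?x l = Min (?x ` U)" by auto
  then have "l \<in> U \<and> (\<forall>k\<in>U. ?x l \<le> ?x k)" using U by simp
  then have "w \<in> U \<and> (\<forall>k\<in>U. ?x w \<le> ?x k)" unfolding w_def by (rule LeastI)
  moreover have "alg3_state n F (Suc j) = (U - {w}, ?x w, A(w := {c..<?x w}))"
    using S unfolding w_def by (simp add: Let_def)
  ultimately show ?thesis using that by blast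
qed

lemma alg3_state_remaining:
  "j < n \<Longrightarrow> fst (alg3_state n F j) \<subseteq> {..<n} \<and> card (fst (alg3_state n F j)) = n - j"
proof (induction j)
  case 0
  then show ?case by simp
next
  case (Suc j)
  obtain U c A where S: "alg3_state n F j = (U, c, A)" by (cases "alg3_state n F j")
  have U: "U \<subseteq> {..<n}" "card U = n - j" using Suc S by auto
  then have "finite U" "U \<noteq> {}" using Suc.prems finite_subset by fastforce+
  then obtain w where "w \<in> U" "alg3_state n F (Suc j) = (U - {w}, cuts (F w) n (Suc j),
      A(w := {c..<cuts (F w) n (Suc j)}))"
    using alg3_state_SucE[OF S] by blast
  then show ?case using U \<open>finite U\<close> by auto
qed

lemma alg3_state_finite_card:
  assumes "alg3_state n F j = (U, c, A)" "j < n"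
  shows "finite U" "card U = n - j"
  using alg3_state_remaining[OF assms(2), of F] assms(1) finite_subset by auto

lemma alg3_cong_cuts:
  assumes "\<forall>l. cuts (F l) n = cuts (G l) n"
  shows "alg3 n F = alg3 n G"
proof -
  have "alg3_state n F j = alg3_state n G j" for j
    by (induction j) (simp_all add: assms)
  then show ?thesis unfolding alg3_def by simp
qed

lemma alg3_state_undercut:
  assumes i: "i < n" and m: "m < n"
    and Fi: "cuts (F i) n = y" and Fo: "\<forall>l. l \<noteq> i \<longrightarrow> cuts (F l) n = z" and z0: "z 0 = 0"
    and below: "\<forall>k. 1 \<le> k \<and> k \<le> m \<longrightarrow> z k < y k"
  shows "j \<le> m \<Longrightarrow> i \<in> fst (alg3_state n F j) \<and> fst (snd (alg3_state n F j)) = z j"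
proof (induction j)
  case 0
  then show ?case using i z0 by simp
next
  case (Suc j)
  obtain U c A where S: "alg3_state n F j = (U, c, A)" by (cases "alg3_state n F j")
  have IH: "i \<in> U" "c = z j" using Suc S by auto
  have U: "finite U" "card U = n - j" using alg3_state_finite_card[OF S] Suc.prems m by auto
  then obtain w where w: "w \<in> U" "\<forall>k\<in>U. cuts (F w) n (Suc j) \<le> cuts (F k) n (Suc j)"
    and S': "alg3_state n F (Suc j) = (U - {w}, cuts (F w) n (Suc j), A(w := {c..<cuts (F w) n (Suc j)}))"
    using alg3_state_SucE[OF S] IH(1) by blast
  have "w \<noteq> i"
  proof
    assume "w = i"
    have "card (U - {i}) > 0" using U IH(1) Suc.prems m by simp
    then obtain l where "l \<in> U" "l \<noteq> i" by (metis card_gt_0_iff DiffE ex_in_conv singletonI)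
    then have "y (Suc j) \<le> z (Suc j)" using w \<open>w = i\<close> Fi Fo by force
    then show False using below Suc.prems by force
  qed
  then show ?case using S' IH Fo by simp
qed

lemma alg3_state_served:
  assumes "i \<notin> fst (alg3_state n F j)" and "j \<le> j'" "j' < n"
  shows "i \<notin> fst (alg3_state n F j') \<and> snd (snd (alg3_state n F j')) i = snd (snd (alg3_state n F j)) i"
  using assms(2,3)
proof (induction j' rule: dec_induct)
  case base
  then show ?case using assms(1) by simp
next
  case (step k)
  obtain U c A where S: "alg3_state n F k = (U, c, A)" by (cases "alg3_state n F k")
  have "finite U" "U \<noteq> {}" using alg3_state_finite_card[OF S] step.prems by auto
  then obtain w where "w \<in> U"
    and "alg3_state n F (Suc k) = (U - {w}, cuts (F w) n (Suc k), A(w := {c..<cuts (F w) n (Suc k)}))"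
    using alg3_state_SucE[OF S] by blast
  then show ?case using step S by auto
qed

lemma alg3_undercut:
  assumes i: "i < n" and m: "m < n"
    and Fi: "cuts (F i) n = y" and Fo: "\<forall>l. l \<noteq> i \<longrightarrow> cuts (F l) n = z" and z0: "z 0 = 0"
    and below: "\<forall>k. 1 \<le> k \<and> k \<le> m \<longrightarrow> z k < y k"
    and above: "Suc m < n \<Longrightarrow> y (Suc m) < z (Suc m)"
  shows "alg3 n F i = (if Suc m < n then {z m..<y (Suc m)} else {z m..1})"
proof -
  obtain U c A where S: "alg3_state n F m = (U, c, A)" by (cases "alg3_state n F m")
  have iU: "i \<in> U" and c: "c = z m"
    using alg3_state_undercut[OF i m Fi Fo z0 below, of m] S by auto
  show ?thesis
  proof (cases "Suc m < n")
    case False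
    then have "m = n - 1" using m by simp
    then show ?thesis using S iU c False unfolding alg3_def by simp
  next
    case True
    have "finite U" "U \<noteq> {}" using alg3_state_finite_card[OF S m] iU by auto
    then obtain w where w: "w \<in> U" "\<forall>k\<in>U. cuts (F w) n (Suc m) \<le> cuts (F k) n (Suc m)"
      and S': "alg3_state n F (Suc m) = (U - {w}, cuts (F w) n (Suc m), A(w := {c..<cuts (F w) n (Suc m)}))"
      using alg3_state_SucE[OF S] by blast
    have "w = i"
    proof (rule ccontr)
      assume "w \<noteq> i"
      then have "z (Suc m) \<le> y (Suc m)" using w iU Fi Fo by force
      then show False using above True by simp
    qed
    then have "i \<notin> fst (alg3_state n F (Suc m))" "snd (snd (alg3_state n F (Suc m))) i = {z m..<y (Suc m)}"
      using S' Fi c by auto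
    then have "i \<notin> fst (alg3_state n F (n - 1))" "snd (snd (alg3_state n F (n - 1))) i = {z m..<y (Suc m)}"
      using alg3_state_served[of i n F "Suc m" "n - 1"] True by auto
    then show ?thesis using True unfolding alg3_def by (cases "alg3_state n F (n - 1)") auto
  qed
qed

section \<open>Risk-averse truthfulness\<close>

lemma exists_interleaving_sequence:
  fixes y :: "nat \<Rightarrow> real"
  assumes y: "y 0 = 0" "y n = 1" "\<forall>j<n. y j < y (Suc j)" and m: "m < n"
    and a: "m = 0 \<Longrightarrow> a = 0" "0 < m \<Longrightarrow> y (m - 1) < a \<and> a < y m"
  obtains z where "z 0 = 0" "z n = 1" "\<forall>j<n. z j < z (Suc j)" "\<forall>j>n. z j = 1" "z m = a"
    "\<forall>k. 1 \<le> k \<and> k \<le> m \<longrightarrow> z k < y k" "Suc m < n \<Longrightarrow> y (Suc m) < z (Suc m)"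
proof
  define z where "z k = (if k = 0 then 0 else if k < m then (y (k - 1) + y k) / 2
      else if k = m then a else if k < n then (y k + y (Suc k)) / 2 else 1)" for k
  show z0: "z 0 = 0" and zn: "z n = 1" and "\<forall>j>n. z j = 1" and zm: "z m = a"
    using m a unfolding z_def by auto
  have below: "y (k - 1) < z k \<and> z k < y k" if "0 < k" "k \<le> m" for k
    using a(2) that y(3)[rule_format, of "k - 1"] m unfolding z_def by auto
  have above: "y k < z k \<and> z k < y (Suc k)" if "m < k" "k < n" for k
    using that y(3) unfolding z_def by auto
  then show "y (Suc m) < z (Suc m)" if "Suc m < n" using that by simp
  show "\<forall>k. 1 \<le> k \<and> k \<le> m \<longrightarrow> z k < y k" using below by auto
  have "z j \<le> y j" if "j \<le> m" for j
    using below[of j] z0 y(1) that by (cases "j = 0") auto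
  moreover have "y j < z (Suc j)" if "j < m" for j
    using below[of "Suc j"] that by simp
  moreover have "y m < z (Suc m)"
  proof (cases "Suc m < n")
    case True
    then show ?thesis using above[of "Suc m"] y(3)[rule_format, OF m] by simp
  next
    case False
    then have "Suc m = n" using m by simp
    then show ?thesis using zn y(2) y(3)[rule_format, OF m] by simp
  qed
  moreover have "z j < y (Suc j)" if "m < j" "j < n" for j
    using above[of j] that by simp
  moreover have "y (Suc j) \<le> z (Suc j)" if "m < j" "j < n" for j
  proof (cases "Suc j < n")
    case True
    then show ?thesis using above[of "Suc j"] that by simp
  next
    case False
    then have "Suc j = n" using that by simp
    then show ?thesis using zn y(2) by simp
  qed
  ultimately show "\<forall>j<n. z j < z (Suc j)"
    by (metis dual_order.strict_trans1 le_less_trans less_or_eq_imp_le linorder_neqE_nat)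
qed

lemma continuous_on_exists_above_left:
  fixes g :: "real \<Rightarrow> real"
  assumes "continuous_on {p..q} g" "p < q" "\<tau> < g q"
  obtains a where "p < a" "a < q" "\<tau> < g a"
proof -
  obtain d where d: "d > 0" "\<forall>x\<in>{p..q}. dist x q < d \<longrightarrow> dist (g x) (g q) < g q - \<tau>"
    using assms unfolding continuous_on_iff by (metis atLeastAtMost_iff diff_gt_0_iff_gt less_eq_real_def)
  define a where "a = max ((p + q) / 2) (q - d / 2)"
  have "p < a" "a < q" "dist a q < d"
    using assms d unfolding a_def dist_real_def by (auto simp: less_max_iff_disj)
  then have "\<tau> < g a" using d(2) by (force simp: dist_real_def)
  then show ?thesis using \<open>p < a\<close> \<open>a < q\<close> that by blast
qed

lemma exists_cut_below:
  assumes hf: "hungry f" and y: "y 0 = 0" "\<forall>j<n. y j < y (Suc j)"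
    and y01: "\<And>k. k \<le> n \<Longrightarrow> y k \<in> {0..1}" and m: "m < n" and \<tau>: "\<tau> < cumulative f (y m)"
  obtains a where "m = 0 \<Longrightarrow> a = 0" "0 < m \<Longrightarrow> y (m - 1) < a \<and> a < y m" "\<tau> < cumulative f a"
proof (cases "m = 0")
  case True
  then show thesis using \<tau> y(1) by (intro that[of 0]) auto
next
  case False
  have "y (m - 1) \<in> {0..1}" "y m \<in> {0..1}" using y01 m by auto
  then have "continuous_on {y (m - 1)..y m} (cumulative f)"
    by (auto intro: continuous_on_subset[OF cumulative_continuous_on[OF hf]])
  then obtain a where "y (m - 1) < a" "a < y m" "\<tau> < cumulative f a"
    using continuous_on_exists_above_left \<tau> y(2) m False
    by (metis Suc_pred' bot_nat_0.not_eq_extremum less_imp_diff_less)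
  then show thesis using that False by blast
qed

lemma alg3_exists_profile_below_proportional:
  assumes n: "n \<ge> 1" and i: "i < n" and hf: "hungry f" and hf': "hungry f'" and m: "m < n"
    and light: "val f {cuts f' n m..<cuts f' n (Suc m)} < val f {0..1} / real n"
  shows "\<exists>F. (\<forall>j<n. j \<noteq> i \<longrightarrow> hungry (F j)) \<and> val f (alg3 n (F(i := f')) i) < val f {0..1} / real n"
proof -
  define y where "y = cuts f' n"
  define quota where "quota = val f {0..1} / real n"
  have "equipartition f' n y" unfolding y_def by (rule equipartition_cuts[OF hf' n])
  then have y: "y 0 = 0" "y n = 1" "\<forall>j<n. y j < y (Suc j)" and y01: "\<And>k. k \<le> n \<Longrightarrow> y k \<in> {0..1}"
    using equipartition_unit_interval unfolding equipartition_def by auto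
  have light': "cumulative f (y (Suc m)) - quota < cumulative f (y m)"
    using light val_atLeastLessThan[OF hf, of "y m" "y (Suc m)"] y01[of m] y01[of "Suc m"] y(3) m
    unfolding y_def[symmetric] quota_def by auto
  obtain a where a: "m = 0 \<Longrightarrow> a = 0" "0 < m \<Longrightarrow> y (m - 1) < a \<and> a < y m"
    and a_heavy: "cumulative f (y (Suc m)) - quota < cumulative f a"
    using exists_cut_below[OF hf y(1,3) y01 m light'] by blast
  obtain z where z: "z 0 = 0" "z n = 1" "\<forall>j<n. z j < z (Suc j)" "\<forall>j>n. z j = 1" "z m = a"
    and below: "\<forall>k. 1 \<le> k \<and> k \<le> m \<longrightarrow> z k < y k" and above: "Suc m < n \<Longrightarrow> y (Suc m) < z (Suc m)"
    using exists_interleaving_sequence[OF y m a] by blast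
  define F where "F = (\<lambda>_::nat. step_density n z)"
  have others: "\<forall>j<n. j \<noteq> i \<longrightarrow> hungry (F j)"
    unfolding F_def using step_density_hungry[OF z(3) n z(1,2)] by simp
  have piece: "alg3 n (F(i := f')) i = (if Suc m < n then {a..<y (Suc m)} else {a..1})"
    using alg3_undercut[OF i m _ _ z(1) below above, of "F(i := f')"]
      cuts_step_density[OF z(3) n z(1,2,4)] z(5) unfolding F_def y_def by simp
  have "0 \<le> a \<and> a \<le> y m"
  proof (cases "m = 0")
    case False
    then have "y (m - 1) < a" "a < y m" using a(2) by auto
    moreover have "y (m - 1) \<in> {0..1}" using y01 m by auto
    ultimately show ?thesis by auto
  qed (use a(1) y(1) in simp)
  moreover have "y m < y (Suc m)" "y (Suc m) \<in> {0..1}" using y(3) y01 m by auto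
  ultimately have "val f {a..<y (Suc m)} = cumulative f (y (Suc m)) - cumulative f a"
    "val f {a..y (Suc m)} = cumulative f (y (Suc m)) - cumulative f a"
    using val_atLeastLessThan[OF hf] val_atLeastAtMost[OF hf] by auto
  moreover have "y (Suc m) = 1" if "\<not> Suc m < n" using that m y(2) by (metis Suc_lessI)
  ultimately have "val f (alg3 n (F(i := f')) i) = cumulative f (y (Suc m)) - cumulative f a"
    using piece by (cases "Suc m < n") auto
  then show ?thesis using a_heavy others unfolding quota_def by auto
qed

theorem mainTheorem10:
  fixes n :: nat
  assumes "n \<ge> 1"
  shows "risk_averse_truthful hungry n (alg3 n)"
  unfolding risk_averse_truthful_def
proof (intro allI impI, goal_cases)
  case (1 i f f')
  then have i: "i < n" and hf: "hungry f" and hf': "hungry f'" by auto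
  let ?y = "cuts f' n"
  show ?case
  proof (cases "\<forall>k<n. val f {0..1} / real n \<le> val f {?y k..<?y (Suc k)}")
    case True
    have "equipartition f' n ?y" by (rule equipartition_cuts[OF hf' assms])
    then have "cuts f n = ?y"
      using True by (intro cuts_eqI[OF hf] equipartitionI_no_lighter_piece[OF hf]) (auto simp: equipartition_def)
    then have "alg3 n (F(i := f')) = alg3 n (F(i := f))" for F
      by (intro alg3_cong_cuts) simp
    then show ?thesis by simp
  next
    case False
    then obtain m where "m < n" "val f {?y m..<?y (Suc m)} < val f {0..1} / real n"
      by (auto simp: not_le)
    then show ?thesis using alg3_exists_profile_below_proportional[OF assms i hf hf'] by blast
  qed
qed

end
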